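(* Let $\bm\mu=(\mu_1,\dots,\mu_r)$ be finite positive Borel measures on the unit circle with infinite supports, fix the square-root branch as in the context, let $\bm n\in\mathbb N^r$ be $\phi$-normal for $\bm\mu$, $\tau\in\partial\mathbb D$, and let $X\not\equiv0$ be a $\tau$-invariant paraorthogonal function for $\bm n$. If the polynomial $z^{(|\bm n|+1)/2}X(z)$ vanishes at two distinct points $e^{i\varphi_1}\neq e^{i\varphi_2}$ of $\partial\mathbb D$ ($\varphi_1,\varphi_2\in\mathbb R$), then $\bm n$ is not $\phi$-normal with respect to the system of real signed measures $\widehat{\bm\mu}$ given by $d\widehat\mu_j(e^{i\theta})=4\sin\frac{\theta-\varphi_1}{2}\sin\frac{\theta-\varphi_2}{2}\,d\mu_j(e^{i\theta})$, $\theta\in[t_0,t_0+2\pi)$, $j=1,\dots,r$.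
   Context: $\partial\mathbb D=\{|z|=1\}$. Fix $t_0\in\mathbb R$ and let $z^{k/2}=|z|^{k/2}\exp(ik\arg_{[t_0,t_0+2\pi)}(z)/2)$, $k\in\mathbb Z$. $|\bm n|=\sum_j n_j$; $\operatorname{span}\{z^p\}_{p=a}^b$ ($b-a\in\mathbb Z$) is the span of $z^a,\dots,z^b$. For a system $\bm\nu$ of (possibly signed) measures on $\partial\mathbb D$, $\bm n$ is $\phi$-normal w.r.t. $\bm\nu$ if there is a unique $\phi\in\operatorname{span}\{z^p\}_{p=-|\bm n|/2}^{|\bm n|/2}$ with coefficient of $z^{|\bm n|/2}$ equal to $1$ such that $\int\phi(z)z^{-p}\,d\nu_j(z)=0$ for $p=-n_j/2,\dots,n_j/2-1$, $j=1,\dots,r$. A $\tau$-invariant paraorthogonal function for $\bm n$ is any $X\in\operatorname{span}\{z^p\}_{p=-(|\bm n|+1)/2}^{(|\bm n|+1)/2}$ with $X(z)=\tau\overline{X(1/\bar z)}$ and $\int X(z)z^{-p}\,d\mu_j(z)=0$ for $p=-(n_j-1)/2,\dots,(n_j-1)/2$, $j=1,\dots,r$. *)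

theory Defs
  imports "HOL-Analysis.Analysis"
begin

text \<open>Argument of z taken in the window [t0, t0 + 2 pi).\<close>
definition argt :: "real \<Rightarrow> complex \<Rightarrow> real" where
  "argt t0 z = Arg z + 2 * pi * of_int \<lceil>(t0 - Arg z) / (2 * pi)\<rceil>"

text \<open>The branch z^(k/2) = |z|^(k/2) exp(i k arg(z) / 2), arg in [t0, t0+2 pi).\<close>
definition zhalf :: "real \<Rightarrow> int \<Rightarrow> complex \<Rightarrow> complex" where
  "zhalf t0 k z = complex_of_real (cmod z powr (real_of_int k / 2))
                  * exp (\<i> * complex_of_real (real_of_int k * argt t0 z / 2))"

text \<open>Element of span of z^p, p = -m/2, ..., m/2, with coefficient c k at z^((2k-m)/2).\<close>
definition hspan :: "real \<Rightarrow> nat \<Rightarrow> (nat \<Rightarrow> complex) \<Rightarrow> complex \<Rightarrow> complex" where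
  "hspan t0 m c z = (\<Sum>k\<le>m. c k * zhalf t0 (2 * int k - int m) z)"

definition msupp :: "complex measure \<Rightarrow> complex set" where
  "msupp M = {z. \<forall>e>0. emeasure M (ball z e) \<noteq> 0}"

text \<open>phi-normality w.r.t. the system of (real signed) measures w_j d mu_j, j < r.\<close>
definition phi_normal_w :: "real \<Rightarrow> nat \<Rightarrow> (nat \<Rightarrow> complex measure) \<Rightarrow> (nat \<Rightarrow> complex \<Rightarrow> real)
    \<Rightarrow> (nat \<Rightarrow> nat) \<Rightarrow> bool" where
  "phi_normal_w t0 r \<mu> w n \<longleftrightarrow>
     (let N = (\<Sum>j<r. n j) in
      \<exists>!c::nat \<Rightarrow> complex. (\<forall>k>N. c k = 0) \<and> c N = 1 \<and>
        (\<forall>j<r. \<forall>k<n j.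
           (LINT z|\<mu> j. complex_of_real (w j z) * hspan t0 N c z
                          * zhalf t0 (int (n j) - 2 * int k) z) = 0))"

definition phi_normal :: "real \<Rightarrow> nat \<Rightarrow> (nat \<Rightarrow> complex measure) \<Rightarrow> (nat \<Rightarrow> nat) \<Rightarrow> bool" where
  "phi_normal t0 r \<mu> n \<longleftrightarrow> phi_normal_w t0 r \<mu> (\<lambda>j z. 1) n"

definition para_orth :: "real \<Rightarrow> nat \<Rightarrow> (nat \<Rightarrow> complex measure) \<Rightarrow> (nat \<Rightarrow> nat) \<Rightarrow> complex
    \<Rightarrow> (complex \<Rightarrow> complex) \<Rightarrow> bool" where
  "para_orth t0 r \<mu> n \<tau> X \<longleftrightarrow>
     (let N = (\<Sum>j<r. n j) in
      (\<exists>d. X = hspan t0 (N + 1) d) \<and>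
      (\<forall>z. z \<noteq> 0 \<longrightarrow> X z = \<tau> * cnj (X (1 / cnj z))) \<and>
      (\<forall>j<r. \<forall>k<n j.
           (LINT z|\<mu> j. X z * zhalf t0 (int (n j) - 1 - 2 * int k) z) = 0))"

end

theory Submission
  imports Defs "HOL-Complex_Analysis.Cauchy_Integral_Theorem" "HOL-Computational_Algebra.Polynomial"
begin

text \<open>
  On the unit circle an element of the half-integer span is z^(-m/2) times a polynomial of
  degree at most m.  Write the paraorthogonal function as X = z^(-(N+1)/2) P with N = |n|.
  If P vanishes at a = e^(i phi1) and b = e^(i phi2), then P = (z - a)(z - b) R with
  deg R < N, and for z = e^(i theta)
    (z - a)(z - b) = - z e^(i (phi1 + phi2)/2) 4 sin((theta - phi1)/2) sin((theta - phi2)/2).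
  Hence the paraorthogonality of X turns into the orthogonality relations of
  z^(-N/2) R with respect to the weighted measures, with vanishing leading coefficient.
  Adding it to the normalised solution gives a second one, so uniqueness forces R = 0,
  contradicting X \<noteq> 0.
\<close>

lemma measurable_Arg [measurable]: "Arg \<in> borel_measurable borel"
  unfolding Arg_def[abs_def] by measurable

lemma measurable_argt [measurable]: "argt t0 \<in> borel_measurable borel"
  unfolding argt_def[abs_def] by measurable

lemma measurable_zhalf [measurable]: "zhalf t0 k \<in> borel_measurable borel"
  unfolding zhalf_def[abs_def] by measurable

lemma measurable_hspan [measurable]: "hspan t0 m c \<in> borel_measurable borel"
  unfolding hspan_def[abs_def] by measurable

lemma zhalf_on_circle: "cmod z = 1 \<Longrightarrow> zhalf t0 k z = cis (of_int k * argt t0 z / 2)"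
  unfolding zhalf_def by (simp add: cis_conv_exp)

lemma norm_zhalf_on_circle: "cmod z = 1 \<Longrightarrow> cmod (zhalf t0 k z) = 1"
  by (simp add: zhalf_on_circle)

lemma cis_argt:
  assumes "cmod z = 1"
  shows "cis (argt t0 z) = z"
proof -
  have "cis (argt t0 z) = cis (Arg z)"
    unfolding argt_def by (simp add: complex_eq_iff cos_add sin_add)
  also have "\<dots> = sgn z"
    using assms by (intro cis_Arg) auto
  also have "\<dots> = z"
    using assms by (simp add: sgn_div_norm)
  finally show ?thesis .
qed

lemma zhalf_mult_on_circle:
  "cmod z = 1 \<Longrightarrow> zhalf t0 k z * zhalf t0 l z = zhalf t0 (k + l) z"
  by (simp add: zhalf_on_circle cis_mult add_divide_distrib distrib_right)

lemma zhalf_even_on_circle: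
  assumes "cmod z = 1"
  shows "zhalf t0 (2 * int k) z = z ^ k"
proof -
  have "zhalf t0 (2 * int k) z = cis (real k * argt t0 z)"
    using assms by (simp add: zhalf_on_circle)
  also have "\<dots> = cis (argt t0 z) ^ k"
    by (rule Complex.DeMoivre[symmetric])
  finally show ?thesis
    using assms by (simp add: cis_argt)
qed

lemma hspan_add: "hspan t0 m (\<lambda>k. c k + e k) z = hspan t0 m c z + hspan t0 m e z"
  unfolding hspan_def by (simp add: distrib_right sum.distrib)

lemma hspan_coeff_poly_on_circle:
  assumes "cmod z = 1" "degree p \<le> m"
  shows "hspan t0 m (coeff p) z = zhalf t0 (- int m) z * poly p z"
proof -
  have "poly p z = (\<Sum>k\<le>m. coeff p k * z ^ k)"
    unfolding poly_altdef using assms(2)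
    by (intro sum.mono_neutral_left) (auto simp: coeff_eq_0)
  moreover have "zhalf t0 (2 * int k - int m) z = zhalf t0 (- int m) z * z ^ k" for k
    using zhalf_mult_on_circle[OF assms(1), of t0 "- int m" "2 * int k"]
    by (simp add: zhalf_even_on_circle[OF assms(1)])
  ultimately show ?thesis
    unfolding hspan_def by (simp add: sum_distrib_left mult_ac)
qed

lemma hspan_eq_hspan_coeff_poly:
  obtains p where "degree p \<le> m" "hspan t0 m d = hspan t0 m (coeff p)"
proof
  let ?p = "\<Sum>k\<le>m. monom (d k) k"
  have coeff_p: "coeff ?p i = (if i \<le> m then d i else 0)" for i
    by (simp add: coeff_sum)
  show "degree ?p \<le> m"
    by (rule degree_le) (simp add: coeff_p)
  show "hspan t0 m d = hspan t0 m (coeff ?p)"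
    unfolding hspan_def by (intro ext sum.cong) (simp_all add: coeff_p)
qed

lemma cis_diff_cis: "cis t - cis p = cis ((t + p) / 2) * (2 * \<i> * of_real (sin ((t - p) / 2)))"
proof -
  have "cis ((t + p) / 2) * (2 * \<i> * of_real (sin ((t - p) / 2)))
      = exp (\<i> * ((t + p) / 2)) * (exp (\<i> * ((t - p) / 2)) - exp (- (\<i> * ((t - p) / 2))))"
    by (simp add: cis_conv_exp sin_of_real[symmetric] sin_exp_eq)
  also have "\<dots> = exp (\<i> * t) - exp (\<i> * p)"
    by (simp add: right_diff_distrib exp_add[symmetric] field_simps)
  finally show ?thesis by (simp add: cis_conv_exp)
qed

lemma cis_diff_mult_cis_diff:
  "(cis t - cis p1) * (cis t - cis p2) =
     - (cis t * cis ((p1 + p2) / 2) * of_real (4 * sin ((t - p1) / 2) * sin ((t - p2) / 2)))"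
proof -
  have "cis ((t + p1) / 2) * cis ((t + p2) / 2) = cis t * cis ((p1 + p2) / 2)"
    by (simp add: cis_mult add_divide_distrib)
  then show ?thesis
    unfolding cis_diff_cis by (simp add: algebra_simps)
qed

subsection \<open>Dividing out two roots on the circle\<close>

lemma poly_two_roots_factor:
  fixes P :: "'a::idom poly"
  assumes "poly P a = 0" "poly P b = 0" "a \<noteq> b"
  obtains R where "P = [:-a, 1:] * [:-b, 1:] * R"
proof -
  obtain Q where Q: "P = [:-a, 1:] * Q"
    using assms(1) poly_eq_0_iff_dvd by blast
  have "poly Q b = 0"
    using assms(2,3) unfolding Q by simp
  then obtain R where R: "Q = [:-b, 1:] * R"
    using poly_eq_0_iff_dvd by blast
  show ?thesis
    by (rule that) (simp only: Q R mult.assoc)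
qed

lemma degree_two_linear_factors:
  "R \<noteq> 0 \<Longrightarrow> degree ([:-a, 1:] * [:-b, 1:] * (R :: 'a::idom poly)) = degree R + 2"
  by (subst degree_mult_eq; simp add: degree_mult_eq)

lemma hspan_two_roots_on_circle:
  assumes z: "cmod z = 1"
    and P: "P = [:-cis \<phi>1, 1:] * [:-cis \<phi>2, 1:] * R" and deg_R: "degree R < N"
  shows "hspan t0 (N + 1) (coeff P) z * zhalf t0 (l - 1) z
    = - cis ((\<phi>1 + \<phi>2) / 2) *
        (of_real (4 * sin ((argt t0 z - \<phi>1) / 2) * sin ((argt t0 z - \<phi>2) / 2))
          * hspan t0 N (coeff R) z * zhalf t0 l z)"
proof -
  have deg_P: "degree P \<le> N + 1"
  proof (cases "R = 0")
    case False
    then have "degree P = degree R + 2"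
      unfolding P by (rule degree_two_linear_factors)
    with deg_R show ?thesis
      by simp
  qed (simp add: P)
  define C where "C = cis ((\<phi>1 + \<phi>2) / 2)"
  define W where "W = complex_of_real
    (4 * sin ((argt t0 z - \<phi>1) / 2) * sin ((argt t0 z - \<phi>2) / 2))"
  have "poly P z = (z - cis \<phi>1) * (z - cis \<phi>2) * poly R z"
    unfolding P by (simp add: algebra_simps)
  also have "(z - cis \<phi>1) * (z - cis \<phi>2) = - (z * C * W)"
    using cis_diff_mult_cis_diff[of "argt t0 z" \<phi>1 \<phi>2]
    unfolding C_def W_def by (simp only: cis_argt[OF z])
  finally have P_z: "poly P z = - (z * C * W) * poly R z" .
  have "zhalf t0 (- int (N + 1)) z * z * zhalf t0 (l - 1) z
      = zhalf t0 (- int (N + 1)) z * zhalf t0 2 z * zhalf t0 (l - 1) z"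
    using zhalf_even_on_circle[OF z, of t0 1] by simp
  also have "\<dots> = zhalf t0 (- int N) z * zhalf t0 l z"
    by (simp add: zhalf_mult_on_circle[OF z])
  finally have shift: "zhalf t0 (- int (N + 1)) z * z * zhalf t0 (l - 1) z
      = zhalf t0 (- int N) z * zhalf t0 l z" .
  have "hspan t0 (N + 1) (coeff P) z * zhalf t0 (l - 1) z
      = zhalf t0 (- int (N + 1)) z * poly P z * zhalf t0 (l - 1) z"
    by (simp only: hspan_coeff_poly_on_circle[OF z deg_P])
  also have "\<dots> = - C * W * poly R z * (zhalf t0 (- int (N + 1)) z * z * zhalf t0 (l - 1) z)"
    by (simp add: P_z mult_ac)
  also have "\<dots> = - C * (W * (zhalf t0 (- int N) z * poly R z) * zhalf t0 l z)"
    unfolding shift by (simp only: mult_ac)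
  also have "\<dots> = - C * (W * hspan t0 N (coeff R) z * zhalf t0 l z)"
    using deg_R by (simp add: hspan_coeff_poly_on_circle[OF z])
  finally show ?thesis
    unfolding C_def W_def .
qed

lemma zhalf_neq_0_on_circle: "cmod z = 1 \<Longrightarrow> zhalf t0 k z \<noteq> 0"
  using norm_zhalf_on_circle[of z t0 k] by auto

lemma hspan_two_roots_factor:
  assumes X: "X = hspan t0 (N + 1) d" and "\<exists>z. X z \<noteq> 0"
    and "cis \<phi>1 \<noteq> cis \<phi>2" "X (cis \<phi>1) = 0" "X (cis \<phi>2) = 0"
  obtains R where "R \<noteq> 0" "degree R < N"
    and "X = hspan t0 (N + 1) (coeff ([:-cis \<phi>1, 1:] * [:-cis \<phi>2, 1:] * R))"
proof -
  obtain P where deg_P: "degree P \<le> N + 1"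
    and "hspan t0 (N + 1) d = hspan t0 (N + 1) (coeff P)"
    by (rule hspan_eq_hspan_coeff_poly)
  with X have X_P: "X = hspan t0 (N + 1) (coeff P)"
    by simp
  have "P \<noteq> 0"
    using assms(2) unfolding X_P hspan_def by auto
  have root: "poly P (cis \<phi>) = 0" if "X (cis \<phi>) = 0" for \<phi>
  proof -
    have "X (cis \<phi>) = zhalf t0 (- int (N + 1)) (cis \<phi>) * poly P (cis \<phi>)"
      unfolding X_P by (rule hspan_coeff_poly_on_circle[OF _ deg_P]) simp
    with that show ?thesis
      using zhalf_neq_0_on_circle[of "cis \<phi>"] by simp
  qed
  then obtain R where P_R: "P = [:-cis \<phi>1, 1:] * [:-cis \<phi>2, 1:] * R"
    using poly_two_roots_factor[OF root root, OF assms(4,5,3)] by blast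
  with \<open>P \<noteq> 0\<close> have "R \<noteq> 0"
    by auto
  then have "degree P = degree R + 2"
    unfolding P_R by (rule degree_two_linear_factors)
  with deg_P have "degree R < N"
    by simp
  with \<open>R \<noteq> 0\<close> show ?thesis
    using X_P unfolding P_R by (rule that)
qed

lemma AE_on_circle:
  assumes "sets M = sets borel" "emeasure M (- sphere 0 1) = 0"
  shows "AE z in M. cmod z = 1"
proof -
  have "AE z in M. z \<in> sphere 0 1"
    by (rule AE_I[where N = "- sphere 0 1"]) (use assms in auto)
  then show ?thesis by simp
qed

lemma integrable_bounded_on_circle:
  fixes g :: "complex \<Rightarrow> complex"
  assumes "finite_measure M" "sets M = sets borel" "emeasure M (- sphere 0 1) = 0"
    and "g \<in> borel_measurable borel" "\<And>z. cmod z = 1 \<Longrightarrow> norm (g z) \<le> B"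
  shows "integrable M g"
proof (rule Bochner_Integration.integrable_bound)
  show "integrable M (\<lambda>_. of_real B :: complex)"
    using assms(1) finite_measure.integrable_const by blast
  show "g \<in> borel_measurable M"
    using assms(2,4) measurable_cong_sets by blast
  show "AE z in M. norm (g z) \<le> norm (of_real B :: complex)"
    using AE_on_circle[OF assms(2,3)]
    by eventually_elim (use assms(5) in \<open>fastforce intro: order_trans[OF _ abs_ge_self]\<close>)
qed

lemma integrable_weighted_hspan:
  assumes "finite_measure M" "sets M = sets borel" "emeasure M (- sphere 0 1) = 0"
    and [measurable]: "w \<in> borel_measurable borel"
    and w_bounded: "\<And>z. cmod z = 1 \<Longrightarrow> \<bar>w z\<bar> \<le> B"
  shows "integrable M (\<lambda>z. of_real (w z) * hspan t0 m c z * zhalf t0 k z)"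
proof (rule integrable_bounded_on_circle[OF assms(1-3)])
  show "(\<lambda>z. of_real (w z) * hspan t0 m c z * zhalf t0 k z) \<in> borel_measurable borel"
    by measurable
  fix z :: complex
  assume z: "cmod z = 1"
  have "cmod (hspan t0 m c z) \<le> (\<Sum>k\<le>m. cmod (c k))"
    unfolding hspan_def
    by (rule order_trans[OF norm_sum]) (simp add: norm_mult norm_zhalf_on_circle[OF z])
  then show "cmod (of_real (w z) * hspan t0 m c z * zhalf t0 k z) \<le> B * (\<Sum>k\<le>m. cmod (c k))"
    using w_bounded[OF z]
    by (simp add: norm_mult norm_zhalf_on_circle[OF z] mult_mono')
qed

lemma integral_hspan_two_roots:
  assumes M: "sets M = sets borel" "emeasure M (- sphere 0 1) = 0"
    and P: "P = [:-cis \<phi>1, 1:] * [:-cis \<phi>2, 1:] * R" and deg_R: "degree R < N"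
  shows "(LINT z|M. hspan t0 (N + 1) (coeff P) z * zhalf t0 (l - 1) z)
    = - cis ((\<phi>1 + \<phi>2) / 2) * (LINT z|M.
        of_real (4 * sin ((argt t0 z - \<phi>1) / 2) * sin ((argt t0 z - \<phi>2) / 2))
          * hspan t0 N (coeff R) z * zhalf t0 l z)"
proof -
  let ?C = "cis ((\<phi>1 + \<phi>2) / 2)"
  let ?f = "\<lambda>z. hspan t0 (N + 1) (coeff P) z * zhalf t0 (l - 1) z"
  let ?g = "\<lambda>z. of_real (4 * sin ((argt t0 z - \<phi>1) / 2) * sin ((argt t0 z - \<phi>2) / 2))
    * hspan t0 N (coeff R) z * zhalf t0 l z"
  have "?f \<in> borel_measurable M" "(\<lambda>z. - ?C * ?g z) \<in> borel_measurable M"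
    by (simp_all add: measurable_cong_sets[OF M(1) refl])
  moreover have "AE z in M. ?f z = - ?C * ?g z"
    using AE_on_circle[OF M] by eventually_elim (rule hspan_two_roots_on_circle[OF _ P deg_R])
  ultimately have "(LINT z|M. ?f z) = (LINT z|M. - ?C * ?g z)"
    by (rule integral_cong_AE)
  then show ?thesis
    by simp
qed

lemma abs_four_sin_mult_sin_le: "\<bar>4 * sin x * sin y\<bar> \<le> (4 :: real)"
proof -
  have "\<bar>sin x\<bar> * \<bar>sin y\<bar> \<le> 1 * 1"
    by (intro mult_mono) auto
  then show ?thesis
    by (simp add: abs_mult)
qed

subsection \<open>Uniqueness in the definition of normality\<close>

lemma phi_normal_w_homogeneous_trivial:
  assumes normal: "phi_normal_w t0 r \<mu> w n"
    and integrable: "\<And>j c k. j < r \<Longrightarrow>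
      integrable (\<mu> j) (\<lambda>z. of_real (w j z) * hspan t0 (\<Sum>j<r. n j) c z * zhalf t0 k z)"
    and e_deg: "\<forall>k\<ge>(\<Sum>j<r. n j). e k = 0"
    and e_orth: "\<forall>j<r. \<forall>k<n j. (LINT z|\<mu> j.
      of_real (w j z) * hspan t0 (\<Sum>j<r. n j) e z * zhalf t0 (int (n j) - 2 * int k) z) = 0"
  shows "e k = 0"
proof -
  define N where "N = (\<Sum>j<r. n j)"
  define solution where "solution c \<longleftrightarrow> (\<forall>k>N. c k = 0) \<and> c N = 1 \<and>
    (\<forall>j<r. \<forall>k<n j. (LINT z|\<mu> j.
       of_real (w j z) * hspan t0 N c z * zhalf t0 (int (n j) - 2 * int k) z) = 0)" for c
  have "\<exists>!c. solution c"
    using normal unfolding phi_normal_w_def Let_def solution_def N_def .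
  then obtain c where "solution c" and unique: "\<And>c'. solution c' \<Longrightarrow> c' = c"
    by blast
  have "solution (\<lambda>k. c k + e k)"
    unfolding solution_def
  proof (intro conjI allI impI)
    show "N < k \<Longrightarrow> c k + e k = 0" "c N + e N = 1" for k
      using \<open>solution c\<close> e_deg unfolding solution_def N_def by simp_all
    fix j k
    assume "j < r" "k < n j"
    define I where "I c' z = of_real (w j z) * hspan t0 N c' z * zhalf t0 (int (n j) - 2 * int k) z"
      for c' z
    have "(LINT z|\<mu> j. I (\<lambda>k. c k + e k) z) = (LINT z|\<mu> j. I c z + I e z)"
      unfolding I_def hspan_add by (simp only: ring_distribs)
    also have "\<dots> = (LINT z|\<mu> j. I c z) + (LINT z|\<mu> j. I e z)"
      unfolding I_def N_def
      by (intro Bochner_Integration.integral_add integrable \<open>j < r\<close>)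
    also have "\<dots> = 0"
      using \<open>solution c\<close> e_orth \<open>j < r\<close> \<open>k < n j\<close> unfolding solution_def I_def N_def by simp
    finally show "(LINT z|\<mu> j. of_real (w j z) * hspan t0 N (\<lambda>k. c k + e k) z
        * zhalf t0 (int (n j) - 2 * int k) z) = 0"
      unfolding I_def .
  qed
  then have "(\<lambda>k. c k + e k) = c"
    by (rule unique)
  then show ?thesis
    by (metis add_cancel_left_right)
qed

theorem theorem4p3:
  fixes t0 :: real and r :: nat and \<mu> :: "nat \<Rightarrow> complex measure" and n :: "nat \<Rightarrow> nat"
    and \<tau> :: complex and X :: "complex \<Rightarrow> complex" and \<phi>1 \<phi>2 :: real
  assumes "\<forall>j<r. sets (\<mu> j) = sets borel"
    and "\<forall>j<r. finite_measure (\<mu> j)"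
    and "\<forall>j<r. emeasure (\<mu> j) (- sphere 0 1) = 0"
    and "\<forall>j<r. infinite (msupp (\<mu> j))"
    and "phi_normal t0 r \<mu> n"
    and "cmod \<tau> = 1"
    and "para_orth t0 r \<mu> n \<tau> X"
    and "\<exists>z. z \<noteq> 0 \<and> X z \<noteq> 0"
    and "cis \<phi>1 \<noteq> cis \<phi>2"
    and "zhalf t0 (int (\<Sum>j<r. n j) + 1) (cis \<phi>1) * X (cis \<phi>1) = 0"
    and "zhalf t0 (int (\<Sum>j<r. n j) + 1) (cis \<phi>2) * X (cis \<phi>2) = 0"
  shows "\<not> phi_normal_w t0 r \<mu>
           (\<lambda>j z. 4 * sin ((argt t0 z - \<phi>1) / 2) * sin ((argt t0 z - \<phi>2) / 2)) n"
proof
  define N where "N = (\<Sum>j<r. n j)"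
  define w where "w z = 4 * sin ((argt t0 z - \<phi>1) / 2) * sin ((argt t0 z - \<phi>2) / 2)" for z
  assume "phi_normal_w t0 r \<mu>
    (\<lambda>j z. 4 * sin ((argt t0 z - \<phi>1) / 2) * sin ((argt t0 z - \<phi>2) / 2)) n"
  then have normal: "phi_normal_w t0 r \<mu> (\<lambda>j. w) n"
    unfolding w_def .
  obtain d where X_d: "X = hspan t0 (N + 1) d"
    and orth_X: "\<forall>j<r. \<forall>k<n j. (LINT z|\<mu> j. X z * zhalf t0 (int (n j) - 1 - 2 * int k) z) = 0"
    using assms(7) unfolding para_orth_def Let_def N_def by blast
  have "\<exists>z. X z \<noteq> 0"
    using assms(8) by blast
  moreover have "X (cis \<phi>1) = 0" "X (cis \<phi>2) = 0"
    using assms(10,11) by (simp_all add: zhalf_neq_0_on_circle)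
  ultimately obtain R where "R \<noteq> 0" and deg_R: "degree R < N"
    and X_R: "X = hspan t0 (N + 1) (coeff ([:-cis \<phi>1, 1:] * [:-cis \<phi>2, 1:] * R))"
    using hspan_two_roots_factor[OF X_d _ assms(9)] by blast
  have orth_R: "(LINT z|\<mu> j.
      of_real (w z) * hspan t0 N (coeff R) z * zhalf t0 (int (n j) - 2 * int k) z) = 0"
    if "j < r" "k < n j" for j k
  proof -
    have "int (n j) - 1 - 2 * int k = (int (n j) - 2 * int k) - 1"
      by simp
    then have "- cis ((\<phi>1 + \<phi>2) / 2) * (LINT z|\<mu> j.
        of_real (w z) * hspan t0 N (coeff R) z * zhalf t0 (int (n j) - 2 * int k) z)
      = (LINT z|\<mu> j. X z * zhalf t0 (int (n j) - 1 - 2 * int k) z)"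
      using assms(1,3) \<open>j < r\<close>
      by (simp only: X_R w_def integral_hspan_two_roots[OF _ _ refl deg_R])
    then show ?thesis
      using orth_X that by simp
  qed
  have "coeff R k = 0" for k
  proof (rule phi_normal_w_homogeneous_trivial[OF normal])
    show "integrable (\<mu> j) (\<lambda>z. of_real (w z) * hspan t0 (\<Sum>j<r. n j) c z * zhalf t0 k z)"
      if "j < r" for j c k
      using that assms(1-3) abs_four_sin_mult_sin_le unfolding w_def
      by (intro integrable_weighted_hspan) auto
  qed (use deg_R orth_R in \<open>simp_all add: N_def coeff_eq_0\<close>)
  then show False
    using \<open>R \<noteq> 0\<close> by (simp add: poly_eq_iff)
qed

end
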